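(* Let $\beta>1$, $l\in(-1,0]$, $r=l+1$, let $T$ be the $(-\beta,l)$-transformation and $d$ the $(-\beta,l)$-expansion, and put $d^*(l)=\lim_{\varepsilon\to0+}d(l+\varepsilon)$ and $d^*(r)=\lim_{\varepsilon\to0+}d(r-\varepsilon)$. If $T^q(l)\neq l$ for all $q\in\mathbb{N}$, or if the equality $T^q(l)=l$ holds only for even $q\in\mathbb{N}$, then $d^*(l)=d(l)$. If on the other hand $T^q(l)=l$ for some odd $q\in\mathbb{N}$, so that $d(l)=(l_1l_2\cdots l_{q-1}l_q)^\omega$, then $$d^*(l)=l_1l_2\cdots l_{q-1}(l_q-1)\,d^*(r).$$
   Context: For $\beta>1$ and $l\in(-1,0]$, $r=l+1$, the $(-\beta,l)$-transformation is $T:[l,r)\to[l,r)$, $T(x)=-\beta x-\lfloor -\beta x-l\rfloor$. The $(-\beta,l)$-expansion of $x\in[l,r)$ is the integer sequence $d(x)=x_1x_2x_3\cdots$ with $x_i=\lfloor -\beta T^{i-1}(x)-l\rfloor$. Limits of sequences are in the product topology (digits lie in a finite set); these one-sided limits exist. $w^\omega$ is the infinite repetition of the word $w$; juxtaposition denotes concatenation. *)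

theory Defs
  imports "HOL-Analysis.Analysis"
begin

definition negT :: "real \<Rightarrow> real \<Rightarrow> real \<Rightarrow> real" where
  "negT \<beta> l x = - \<beta> * x - of_int \<lfloor>- \<beta> * x - l\<rfloor>"

text \<open>The (-beta,l)-expansion d(x) = x_1 x_2 ..., indexed from 0:
  dexp beta l x n = x_(n+1) = floor(-beta T^n(x) - l).
  Sequences nat => int carry the product topology (Function_Topology).\<close>
definition dexp :: "real \<Rightarrow> real \<Rightarrow> real \<Rightarrow> nat \<Rightarrow> int" where
  "dexp \<beta> l x n = \<lfloor>- \<beta> * ((negT \<beta> l ^^ n) x) - l\<rfloor>"

end

theory Submission
  imports Defs
begin

text \<open>
  Where the first digit equals \<open>k\<close>, \<open>T\<close> is the decreasing affine map \<open>x \<mapsto> -\<beta> x - k\<close>.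
  Hence, approaching \<open>y\<close> from one side, the first digit is eventually that of \<open>y\<close> and \<open>T x\<close>
  approaches \<open>T y\<close> from the other side, unless the approach is from the right and \<open>T y = l\<close>:
  then \<open>-\<beta> y - l\<close> is an integer, the digit is eventually one less and \<open>T x\<close> tends to \<open>r\<close>
  from the left. Approaching \<open>l\<close> from the right, \<open>T\<^sup>j x\<close> approaches \<open>T\<^sup>j l\<close> from the right
  exactly for even \<open>j\<close>, so a return \<open>T\<^sup>q l = l\<close> affects the limit only for odd \<open>q\<close>, and then
  the digits after position \<open>q\<close> are those of \<open>d\<^sup>*(r)\<close>.
\<close>

lemma tendsto_componentwise_iff:
  fixes f :: "'a \<Rightarrow> 'i \<Rightarrow> 'b::topological_space"
  shows "(f \<longlongrightarrow> g) F \<longleftrightarrow> (\<forall>i. ((\<lambda>x. f x i) \<longlongrightarrow> g i) F)"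
proof -
  have "(f \<longlongrightarrow> g) F \<longleftrightarrow> limitin (product_topology (\<lambda>i. euclidean) UNIV) f g F"
    by (simp add: euclidean_product_topology limitin_canonical_iff)
  also have "\<dots> \<longleftrightarrow> (\<forall>i. ((\<lambda>x. f x i) \<longlongrightarrow> g i) F)"
    by (simp add: limitin_componentwise)
  finally show ?thesis .
qed

definition at_side :: "bool \<Rightarrow> real \<Rightarrow> real filter" where
  "at_side b y = (if b then at_right y else at_left y)"

lemma filterlim_decreasing_affine_at_side:
  fixes a c y :: real
  assumes "c > 0"
  shows "filterlim (\<lambda>x. - c * x - a) (at_side (\<not> b) (- c * y - a)) (at_side b y)"
proof (cases b)
  case True
  have "\<forall>\<^sub>F x in at_right y. - c * x - a < - c * y - a"
    using assms by (auto simp: eventually_at_filter)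
  moreover have "((\<lambda>x. - c * x - a) \<longlongrightarrow> - c * y - a) (at_right y)"
    by (intro tendsto_intros)
  ultimately show ?thesis using True
    by (auto simp: at_side_def filterlim_at elim: eventually_mono)
next
  case False
  have "\<forall>\<^sub>F x in at_left y. - c * x - a > - c * y - a"
    using assms by (auto simp: eventually_at_filter)
  moreover have "((\<lambda>x. - c * x - a) \<longlongrightarrow> - c * y - a) (at_left y)"
    by (intro tendsto_intros)
  ultimately show ?thesis using False
    by (auto simp: at_side_def filterlim_at elim: eventually_mono)
qed

lemma eventually_floor_at_right: "\<forall>\<^sub>F t in at_right z. \<lfloor>t\<rfloor> = \<lfloor>z::real\<rfloor>"
proof -
  have "z < of_int \<lfloor>z\<rfloor> + 1" by linarith
  then show ?thesis
    by (rule eventually_mono[OF eventually_at_right_real]) (simp add: floor_eq_iff; linarith)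
qed

lemma eventually_floor_at_left: "\<forall>\<^sub>F t in at_left z. \<lfloor>t\<rfloor> = \<lceil>z::real\<rceil> - 1"
proof -
  have "of_int (\<lceil>z\<rceil> - 1) < z" by linarith
  then show ?thesis
    by (rule eventually_mono[OF eventually_at_left_real]) (simp add: floor_eq_iff; linarith)
qed

lemma negT_eq_frac: "negT \<beta> l x = l + frac (- \<beta> * x - l)"
  unfolding negT_def frac_def by simp

lemma negT_eq_l_iff: "negT \<beta> l x = l \<longleftrightarrow> - \<beta> * x - l \<in> \<int>"
  by (simp add: negT_eq_frac)

lemma dexp_0: "dexp \<beta> l x 0 = \<lfloor>- \<beta> * x - l\<rfloor>"
  unfolding dexp_def by simp

lemma dexp_add: "dexp \<beta> l x (m + n) = dexp \<beta> l ((negT \<beta> l ^^ m) x) n"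
  unfolding dexp_def add.commute[of m n] funpow_add by simp

lemma dexp_Suc: "dexp \<beta> l x (Suc n) = dexp \<beta> l (negT \<beta> l x) n"
  using dexp_add[where m=1] by simp

context
  fixes \<beta> l :: real
  assumes \<beta>_pos: "\<beta> > 0"
begin

lemma eventually_floor_at_side:
  "\<forall>\<^sub>F x in at_side b y. \<lfloor>- \<beta> * x - l\<rfloor> =
     (if b then \<lceil>- \<beta> * y - l\<rceil> - 1 else \<lfloor>- \<beta> * y - l\<rfloor>)"
proof -
  have "filterlim (\<lambda>x. - \<beta> * x - l) (at_side (\<not> b) (- \<beta> * y - l)) (at_side b y)"
    using \<beta>_pos by (rule filterlim_decreasing_affine_at_side)
  moreover have "\<forall>\<^sub>F t in at_side (\<not> b) (- \<beta> * y - l).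
      \<lfloor>t\<rfloor> = (if b then \<lceil>- \<beta> * y - l\<rceil> - 1 else \<lfloor>- \<beta> * y - l\<rfloor>)"
    using eventually_floor_at_left eventually_floor_at_right by (simp add: at_side_def)
  ultimately show ?thesis
    by (rule eventually_compose_filterlim[rotated])
qed

lemma filterlim_negT_of_eventually_floor:
  assumes "\<forall>\<^sub>F x in at_side b y. \<lfloor>- \<beta> * x - l\<rfloor> = k"
  shows "filterlim (negT \<beta> l) (at_side (\<not> b) (- \<beta> * y - of_int k)) (at_side b y)"
proof -
  have "\<forall>\<^sub>F x in at_side b y. - \<beta> * x - of_int k = negT \<beta> l x"
    using assms by eventually_elim (simp add: negT_def)
  moreover have "filterlim (\<lambda>x. - \<beta> * x - of_int k) (at_side (\<not> b) (- \<beta> * y - of_int k)) (at_side b y)"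
    using \<beta>_pos by (rule filterlim_decreasing_affine_at_side)
  ultimately show ?thesis
    by (rule filterlim_cong[OF refl refl, THEN iffD1])
qed

lemma negT_step_at_side:
  assumes "b \<longrightarrow> negT \<beta> l y \<noteq> l"
  shows "\<forall>\<^sub>F x in at_side b y. dexp \<beta> l x 0 = dexp \<beta> l y 0"
    and "filterlim (negT \<beta> l) (at_side (\<not> b) (negT \<beta> l y)) (at_side b y)"
proof -
  have "b \<longrightarrow> \<lceil>- \<beta> * y - l\<rceil> - 1 = \<lfloor>- \<beta> * y - l\<rfloor>"
    using assms by (auto simp: negT_eq_l_iff ceiling_altdef) (metis Ints_of_int)
  then have floor_eq: "\<forall>\<^sub>F x in at_side b y. \<lfloor>- \<beta> * x - l\<rfloor> = \<lfloor>- \<beta> * y - l\<rfloor>"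
    using eventually_floor_at_side[of b y] by (cases b) auto
  then show "\<forall>\<^sub>F x in at_side b y. dexp \<beta> l x 0 = dexp \<beta> l y 0"
    by (simp add: dexp_0)
  from filterlim_negT_of_eventually_floor[OF floor_eq]
  show "filterlim (negT \<beta> l) (at_side (\<not> b) (negT \<beta> l y)) (at_side b y)"
    by (simp add: negT_def)
qed

lemma negT_step_to_l:
  assumes "negT \<beta> l y = l"
  shows "\<forall>\<^sub>F x in at_right y. dexp \<beta> l x 0 = dexp \<beta> l y 0 - 1"
    and "filterlim (negT \<beta> l) (at_left (l + 1)) (at_right y)"
proof -
  obtain k where k: "- \<beta> * y - l = of_int k"
    using assms by (auto simp: negT_eq_l_iff elim: Ints_cases)
  then have floor_eq: "\<forall>\<^sub>F x in at_side True y. \<lfloor>- \<beta> * x - l\<rfloor> = k - 1"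
    using eventually_floor_at_side[of True y] by simp
  then show "\<forall>\<^sub>F x in at_right y. dexp \<beta> l x 0 = dexp \<beta> l y 0 - 1"
    using k by (simp add: dexp_0 at_side_def)
  have limit_eq: "- \<beta> * y - of_int (k - 1) = l + 1"
    using k by simp
  show "filterlim (negT \<beta> l) (at_left (l + 1)) (at_right y)"
    using filterlim_negT_of_eventually_floor[OF floor_eq]
    by (simp only: limit_eq at_side_def not_True_eq_False if_True if_False)
qed

text \<open>
  Since \<open>T\<close> reverses orientation, after \<open>j\<close> steps of an approach from side \<open>b\<close>
  the approach is from the right iff \<open>b = even j\<close>.
\<close>

lemma filterlim_funpow_negT_at_side:
  assumes "\<forall>j<m. b = even j \<longrightarrow> (negT \<beta> l ^^ Suc j) y \<noteq> l"
  shows "filterlim (negT \<beta> l ^^ m) (at_side (b = even m) ((negT \<beta> l ^^ m) y)) (at_side b y)"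
  using assms
proof (induction m)
  case 0
  show ?case by (simp add: filterlim_ident)
next
  case (Suc m)
  then have "filterlim (negT \<beta> l ^^ m) (at_side (b = even m) ((negT \<beta> l ^^ m) y)) (at_side b y)"
    by simp
  moreover have "filterlim (negT \<beta> l) (at_side (b = even (Suc m)) ((negT \<beta> l ^^ Suc m) y))
      (at_side (b = even m) ((negT \<beta> l ^^ m) y))"
    using negT_step_at_side(2)[of "b = even m"] Suc.prems by simp
  ultimately show ?case
    by (simp add: filterlim_compose)
qed

lemma dexp_eventually_eq_at_side:
  assumes "\<forall>j\<le>n. b = even j \<longrightarrow> (negT \<beta> l ^^ Suc j) y \<noteq> l"
  shows "\<forall>\<^sub>F x in at_side b y. dexp \<beta> l x n = dexp \<beta> l y n"
proof -
  have "filterlim (negT \<beta> l ^^ n) (at_side (b = even n) ((negT \<beta> l ^^ n) y)) (at_side b y)"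
    using assms by (intro filterlim_funpow_negT_at_side) auto
  moreover have "\<forall>\<^sub>F z in at_side (b = even n) ((negT \<beta> l ^^ n) y).
      dexp \<beta> l z 0 = dexp \<beta> l ((negT \<beta> l ^^ n) y) 0"
    using assms by (intro negT_step_at_side(1)) auto
  ultimately have "\<forall>\<^sub>F x in at_side b y. dexp \<beta> l ((negT \<beta> l ^^ n) x) 0 = dexp \<beta> l ((negT \<beta> l ^^ n) y) 0"
    by (rule eventually_compose_filterlim[rotated])
  then show ?thesis
    using dexp_add[where m=n and n=0] by simp
qed

lemma ex_eventually_dexp_eq_at_side: "\<exists>c. \<forall>\<^sub>F x in at_side b y. dexp \<beta> l x n = c"
proof (induction n arbitrary: b y)
  case 0
  show ?case
    using negT_step_at_side(1)[of b y] negT_step_to_l(1)[of y]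
    by (cases "b \<and> negT \<beta> l y = l") (auto simp: at_side_def)
next
  case (Suc n)
  have "\<exists>b' y'. filterlim (negT \<beta> l) (at_side b' y') (at_side b y)"
  proof (cases "b \<and> negT \<beta> l y = l")
    case True
    then have "filterlim (negT \<beta> l) (at_side False (l + 1)) (at_side b y)"
      using negT_step_to_l(2)[of y] by (simp add: at_side_def)
    then show ?thesis by blast
  next
    case False
    then show ?thesis
      using negT_step_at_side(2)[of b y] by blast
  qed
  then obtain b' y' where "filterlim (negT \<beta> l) (at_side b' y') (at_side b y)"
    by blast
  moreover obtain c where "\<forall>\<^sub>F z in at_side b' y'. dexp \<beta> l z n = c"
    using Suc.IH by blast
  ultimately have "\<forall>\<^sub>F x in at_side b y. dexp \<beta> l (negT \<beta> l x) n = c"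
    by (rule eventually_compose_filterlim[rotated])
  then show ?case
    by (auto simp: dexp_Suc)
qed

lemma convergent_dexp_at_side: "\<exists>s. ((\<lambda>x. dexp \<beta> l x) \<longlongrightarrow> s) (at_side b y)"
proof -
  have "\<forall>n. \<exists>c. \<forall>\<^sub>F x in at_side b y. dexp \<beta> l x n = c"
    using ex_eventually_dexp_eq_at_side by blast
  then obtain s where "\<forall>n. \<forall>\<^sub>F x in at_side b y. dexp \<beta> l x n = s n"
    unfolding choice_iff by blast
  then show ?thesis
    by (auto simp: tendsto_componentwise_iff intro: tendsto_eventually)
qed

lemma tendsto_dexp_at_side_no_return:
  assumes "\<forall>j. b = even j \<longrightarrow> (negT \<beta> l ^^ Suc j) y \<noteq> l"
  shows "((\<lambda>x. dexp \<beta> l x) \<longlongrightarrow> dexp \<beta> l y) (at_side b y)"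
  using assms dexp_eventually_eq_at_side
  by (auto simp: tendsto_componentwise_iff intro: tendsto_eventually)

lemma tendsto_dexp_at_side_first_return:
  assumes no_return: "\<forall>j<m. b = even j \<longrightarrow> (negT \<beta> l ^^ Suc j) y \<noteq> l"
    and return: "b = even m" "(negT \<beta> l ^^ Suc m) y = l"
    and limit_r: "((\<lambda>x. dexp \<beta> l x) \<longlongrightarrow> s) (at_left (l + 1))"
  shows "((\<lambda>x. dexp \<beta> l x) \<longlongrightarrow>
          (\<lambda>n. if n < m then dexp \<beta> l y n else if n = m then dexp \<beta> l y n - 1 else s (n - Suc m)))
         (at_side b y)"
proof -
  have hit: "negT \<beta> l ((negT \<beta> l ^^ m) y) = l"
    using return(2) by simp
  have to_return: "filterlim (negT \<beta> l ^^ m) (at_right ((negT \<beta> l ^^ m) y)) (at_side b y)"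
    using filterlim_funpow_negT_at_side[OF no_return] return by (simp add: at_side_def)
  have "\<forall>\<^sub>F x in at_side b y.
      dexp \<beta> l ((negT \<beta> l ^^ m) x) 0 = dexp \<beta> l ((negT \<beta> l ^^ m) y) 0 - 1"
    using negT_step_to_l(1)[OF hit] to_return by (rule eventually_compose_filterlim)
  then have return_digit: "\<forall>\<^sub>F x in at_side b y. dexp \<beta> l x m = dexp \<beta> l y m - 1"
    using dexp_add[where m=m and n=0] by simp
  have "filterlim (negT \<beta> l ^^ Suc m) (at_left (l + 1)) (at_side b y)"
    using filterlim_compose[OF negT_step_to_l(2)[OF hit] to_return]
    unfolding funpow.simps(2) comp_def .
  then have tail: "((\<lambda>x. dexp \<beta> l ((negT \<beta> l ^^ Suc m) x)) \<longlongrightarrow> s) (at_side b y)"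
    using limit_r by (rule filterlim_compose[rotated])
  show ?thesis
    unfolding tendsto_componentwise_iff
  proof
    fix n
    show "((\<lambda>x. dexp \<beta> l x n) \<longlongrightarrow>
        (if n < m then dexp \<beta> l y n else if n = m then dexp \<beta> l y n - 1 else s (n - Suc m))) (at_side b y)"
    proof (cases "m < n")
      case True
      then have n_eq: "n = Suc m + (n - Suc m)"
        by simp
      have "((\<lambda>x. dexp \<beta> l ((negT \<beta> l ^^ Suc m) x) (n - Suc m)) \<longlongrightarrow> s (n - Suc m)) (at_side b y)"
        using tail by (simp add: tendsto_componentwise_iff)
      then show ?thesis
        using True by (subst n_eq, subst dexp_add) simp
    next
      case False
      then show ?thesis
        using no_return return_digit dexp_eventually_eq_at_side[where n=n and b=b and y=y]
        by (auto intro: tendsto_eventually)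
    qed
  qed
qed

end

theorem mainTheorem5:
  fixes \<beta> l :: real
  assumes "\<beta> > 1" and "-1 < l" and "l \<le> 0"
  shows "(((\<forall>q::nat. q \<ge> 1 \<longrightarrow> (negT \<beta> l ^^ q) l \<noteq> l)
            \<or> (\<forall>q::nat. q \<ge> 1 \<longrightarrow> (negT \<beta> l ^^ q) l = l \<longrightarrow> even q))
           \<longrightarrow> ((\<lambda>x. dexp \<beta> l x) \<longlongrightarrow> dexp \<beta> l l) (at_right l))
    \<and> (\<forall>q::nat. q \<ge> 1 \<and> odd q \<and> (negT \<beta> l ^^ q) l = l
            \<and> (\<forall>p. 1 \<le> p \<and> p < q \<longrightarrow> (negT \<beta> l ^^ p) l \<noteq> l)
         \<longrightarrow> (\<exists>sr :: nat \<Rightarrow> int.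
                ((\<lambda>x. dexp \<beta> l x) \<longlongrightarrow> sr) (at_left (l + 1))
              \<and> ((\<lambda>x. dexp \<beta> l x) \<longlongrightarrow>
                   (\<lambda>n. if n < q - 1 then dexp \<beta> l l n
                        else if n = q - 1 then dexp \<beta> l l n - 1
                        else sr (n - q))) (at_right l)))"
proof -
  have \<beta>_pos: "\<beta> > 0"
    using assms(1) by simp
  have aperiodic: "((\<lambda>x. dexp \<beta> l x) \<longlongrightarrow> dexp \<beta> l l) (at_right l)"
    if hyp: "(\<forall>q::nat. q \<ge> 1 \<longrightarrow> (negT \<beta> l ^^ q) l \<noteq> l)
        \<or> (\<forall>q::nat. q \<ge> 1 \<longrightarrow> (negT \<beta> l ^^ q) l = l \<longrightarrow> even q)"
  proof -
    have "\<forall>j. True = even j \<longrightarrow> (negT \<beta> l ^^ Suc j) l \<noteq> l"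
      using hyp by (auto dest!: spec[of _ "Suc j" for j] simp del: funpow.simps)
    then show ?thesis
      using tendsto_dexp_at_side_no_return[OF \<beta>_pos, where b=True and y=l] by (simp add: at_side_def)
  qed
  have odd_return: "\<exists>sr :: nat \<Rightarrow> int.
      ((\<lambda>x. dexp \<beta> l x) \<longlongrightarrow> sr) (at_left (l + 1))
      \<and> ((\<lambda>x. dexp \<beta> l x) \<longlongrightarrow>
          (\<lambda>n. if n < q - 1 then dexp \<beta> l l n
               else if n = q - 1 then dexp \<beta> l l n - 1
               else sr (n - q))) (at_right l)"
    if q: "q \<ge> 1" "odd q" "(negT \<beta> l ^^ q) l = l"
      and first: "\<forall>p. 1 \<le> p \<and> p < q \<longrightarrow> (negT \<beta> l ^^ p) l \<noteq> l" for q :: nat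
  proof -
    have q_eq: "Suc (q - 1) = q"
      using q(1) by simp
    obtain sr where sr: "((\<lambda>x. dexp \<beta> l x) \<longlongrightarrow> sr) (at_left (l + 1))"
      using convergent_dexp_at_side[OF \<beta>_pos, where b=False and y="l + 1"]
      by (auto simp: at_side_def)
    have "\<forall>j<q - 1. True = even j \<longrightarrow> (negT \<beta> l ^^ Suc j) l \<noteq> l"
      using first by (auto simp del: funpow.simps)
    moreover have "True = even (q - 1)" "(negT \<beta> l ^^ Suc (q - 1)) l = l"
      using q q_eq by simp_all
    ultimately have "((\<lambda>x. dexp \<beta> l x) \<longlongrightarrow>
        (\<lambda>n. if n < q - 1 then dexp \<beta> l l n else if n = q - 1 then dexp \<beta> l l n - 1
             else sr (n - Suc (q - 1)))) (at_side True l)"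
      by (rule tendsto_dexp_at_side_first_return[OF \<beta>_pos _ _ _ sr])
    then show ?thesis
      using sr unfolding q_eq at_side_def by auto
  qed
  show ?thesis
    using aperiodic odd_return by blast
qed

end
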